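(* Let $n\in\mathbf{N}$, $b\in\mathbf{N}$ with $b>n/2$, and $\ell\in\mathbf{N}$. There exists $C>0$ such that $\|m^2_{b,\ell,H}(\cdot,t)\|_{L^2(\mathbf{R}^n_\xi)}\le Ct^{b-1}e^{-t/2}$ for all $t\ge1$.
   Context: Expressions $\cos(t\sqrt z)$, $\sin(t\sqrt z)/\sqrt z$ denote the entire functions $\sum_m(-1)^mt^{2m}z^m/(2m)!$, $\sum_m(-1)^mt^{2m+1}z^m/(2m+1)!$ of $z\in\mathbf{R}$. For $r\ge0$, $c\in\mathbf{R}$, $a\in[0,1]$ with $4ar^2<1$, $t>0$: $f(r,c,t)=\cos(t\sqrt{r^2-c})$, $h(r,a,t)=\frac{1}{\sqrt{1-4ar^2}}\exp(-\frac{2tr^2}{1+\sqrt{1-4ar^2}})$. For $\xi\neq0$: $W^2_b(\xi,t)=2t^{-1}\sum_{k=0}^{b-2}(\frac14)^k\frac1{k!}\partial_c^{k+1}f(|\xi|,0,t)$ if $b\ge2$ and $W^2_1\equiv0$; $D^2_\ell(\xi,t)=\sum_{k=0}^{\ell-1}\frac1{k!}\partial_a^kh(|\xi|,0,t)$. Let $\chi_H$ be a smooth function on $[0,\infty)$ with $\chi_H(r)=1$ for $r\ge2$ and $\chi_H(r)=0$ for $r\le1$. Define $m^2_{b,\ell,H}(\xi,t)=\chi_H(|\xi|)\Big[e^{-t/2}\frac{\sin(t\sqrt{|\xi|^2-1/4})}{\sqrt{|\xi|^2-1/4}}-e^{-t/2}W^2_b(\xi,t)-D^2_\ell(\xi,t)\Big]$.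 *)

theory Defs
  imports "HOL-Analysis.Analysis"
begin

text \<open>The entire function cos(t sqrt z) of z, as a power series.\<close>
definition cosE :: "real \<Rightarrow> real \<Rightarrow> real" where
  "cosE t z = (\<Sum>m. (-1)^m * t^(2*m) * z^m / fact (2*m))"

text \<open>The entire function sin(t sqrt z)/sqrt z of z, as a power series.\<close>
definition sincE :: "real \<Rightarrow> real \<Rightarrow> real" where
  "sincE t z = (\<Sum>m. (-1)^m * t^(2*m+1) * z^m / fact (2*m+1))"

definition fF :: "real \<Rightarrow> real \<Rightarrow> real \<Rightarrow> real" where
  "fF r c t = cosE t (r^2 - c)"

definition hH :: "real \<Rightarrow> real \<Rightarrow> real \<Rightarrow> real" where
  "hH r a t = 1 / sqrt (1 - 4*a*r^2) * exp (- (2*t*r^2) / (1 + sqrt (1 - 4*a*r^2)))"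

definition W2 :: "nat \<Rightarrow> 'a::real_normed_vector \<Rightarrow> real \<Rightarrow> real" where
  "W2 b \<xi> t = (if b \<ge> 2 then 2 / t * (\<Sum>k=0..b-2. (1/4)^k / fact k *
        (deriv ^^ (k+1)) (\<lambda>c. fF (norm \<xi>) c t) 0) else 0)"

definition D2 :: "nat \<Rightarrow> 'a::real_normed_vector \<Rightarrow> real \<Rightarrow> real" where
  "D2 l \<xi> t = (\<Sum>k<l. 1 / fact k * (deriv ^^ k) (\<lambda>a. hH (norm \<xi>) a t) 0)"

definition m2 :: "(real \<Rightarrow> real) \<Rightarrow> nat \<Rightarrow> nat \<Rightarrow> 'a::real_normed_vector \<Rightarrow> real \<Rightarrow> real" where
  "m2 chiH b l \<xi> t = chiH (norm \<xi>) *
     (exp (-t/2) * sincE t ((norm \<xi>)^2 - 1/4) - exp (-t/2) * W2 b \<xi> t - D2 l \<xi> t)"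

end

theory Submission
  imports Defs "HOL-Complex_Analysis.Complex_Analysis"
begin

text \<open>Away from the unit ball, m2 is exp (-t/2) times the Lagrange remainder of the Taylor
  expansion of z \<mapsto> sin (t sqrt z) / sqrt z at |xi|^2, evaluated at |xi|^2 - 1/4, minus D2,
  the sum of the first l Taylor coefficients of a \<mapsto> h(|xi|, a, t) at 0. Both are controlled by
  Cauchy estimates for holomorphic extensions: sin (t sqrt w) / sqrt w on a disc of radius s/(4t)
  around s^2 gives a remainder of order t^(b-1) |xi|^(-b), and h(r, \<cdot>, t) on the circle
  |a| = 1/(8 r^2) gives Taylor coefficients of size (8 r^2)^k exp (-(4/5) t r^2), which is
  e^(-t/2) times a rapidly decaying function of r. Hence
  |m2| \<le> C t^(b-1) e^(-t/2) (1 + |xi|^2)^(-b/2), which is square integrable because b > n/2.\<close>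

section \<open>Entire functions behind cosE and sincE\<close>

definition trig_sqrt_coeff :: "nat \<Rightarrow> real \<Rightarrow> nat \<Rightarrow> real" where
  "trig_sqrt_coeff j t n = (-1)^n * t^(2*n+j) / fact (2*n+j)"

text \<open>For \<open>j = 0\<close> and \<open>j = 1\<close> these are the entire functions cos (t sqrt w) and
  sin (t sqrt w) / sqrt w, whose restrictions to the reals are cosE and sincE.\<close>

definition trig_sqrt :: "nat \<Rightarrow> real \<Rightarrow> complex \<Rightarrow> complex" where
  "trig_sqrt j t w = (\<Sum>n. of_real (trig_sqrt_coeff j t n) * w^n)"

lemma summable_trig_sqrt:
  "summable (\<lambda>n. of_real (trig_sqrt_coeff j t n) * (w::'a::{real_normed_field,banach})^n)"
proof (rule summable_comparison_test)
  show "summable (\<lambda>n. \<bar>t\<bar>^j * (inverse (fact n) * (t^2 * norm w)^n))"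
    by (intro summable_mult summable_exp)
  have "norm (of_real (trig_sqrt_coeff j t n) * w^n) \<le> \<bar>t\<bar>^j * (inverse (fact n) * (t^2 * norm w)^n)"
    for n
  proof -
    have "fact n \<le> (fact (2*n+j) :: real)" by (intro fact_mono) auto
    then have "norm (of_real (trig_sqrt_coeff j t n) * w^n) \<le> \<bar>t\<bar>^(2*n+j) * norm w^n / fact n"
      by (simp only: norm_mult norm_of_real norm_power)
        (simp add: trig_sqrt_coeff_def abs_mult power_abs divide_left_mono)
    also have "\<dots> = \<bar>t\<bar>^j * (inverse (fact n) * (t^2 * norm w)^n)"
    proof -
      have "\<bar>t\<bar>^(2*n+j) = \<bar>t\<bar>^j * (t^2)^n"
        by (simp add: power_add power_mult power2_abs)
      then show ?thesis by (simp add: power_mult_distrib divide_inverse)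
    qed
    finally show ?thesis .
  qed
  then show "\<exists>N. \<forall>n\<ge>N. norm (of_real (trig_sqrt_coeff j t n) * w^n)
      \<le> \<bar>t\<bar>^j * (inverse (fact n) * (t^2 * norm w)^n)" by blast
qed

lemma trig_sqrt_has_field_derivative:
  "(trig_sqrt j t has_field_derivative
     (\<Sum>n. diffs (\<lambda>n. of_real (trig_sqrt_coeff j t n)) n * w^n)) (at w)"
  unfolding trig_sqrt_def[abs_def]
  by (rule termdiffs_strong_converges_everywhere[OF summable_trig_sqrt])

lemma holomorphic_trig_sqrt: "trig_sqrt j t holomorphic_on S"
  using trig_sqrt_has_field_derivative
  by (meson field_differentiable_at_within field_differentiable_def holomorphic_on_def)

lemma of_real_trig_sqrt_series:
  "of_real (\<Sum>n. trig_sqrt_coeff j t n * x^n) = trig_sqrt j t (of_real x)"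
  using suminf_of_real[OF summable_trig_sqrt[of j t x, simplified]]
  by (simp add: trig_sqrt_def)

lemma cosE_eq_trig_sqrt: "cosE t x = Re (trig_sqrt 0 t (of_real x))"
  using of_real_trig_sqrt_series[of 0 t x, symmetric]
  by (simp add: cosE_def trig_sqrt_coeff_def)

lemma sincE_eq_trig_sqrt: "sincE t x = Re (trig_sqrt 1 t (of_real x))"
  using of_real_trig_sqrt_series[of 1 t x, symmetric]
  by (simp add: sincE_def trig_sqrt_coeff_def)

lemma diffs_trig_sqrt_coeff_0:
  "diffs (\<lambda>n. of_real (trig_sqrt_coeff 0 t n)) n = of_real (-t/2) * of_real (trig_sqrt_coeff 1 t n)"
proof -
  define F :: real where "F = fact (2*n+1)"
  have F: "F > 0" and fact: "fact (2 * Suc n + 0) = (2 * real n + 2) * F"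
    using fact_Suc[of "2*n+1"] by (simp_all add: F_def)
  have e: "(2 * real n + 2) * F = real (Suc n) * (2 * F)" by (simp add: algebra_simps)
  have "real (Suc n) * trig_sqrt_coeff 0 t (Suc n) = (-1)^Suc n * t^(2 * Suc n) / (2 * F)"
    unfolding trig_sqrt_coeff_def fact e
    by (metis (no_types) of_nat_0_less_iff zero_less_Suc less_irrefl add_0_right
        times_divide_eq_right nonzero_mult_divide_mult_cancel_left)
  also have "\<dots> = (-t/2) * trig_sqrt_coeff 1 t n"
    by (simp add: trig_sqrt_coeff_def F_def field_simps)
  finally show ?thesis
    unfolding diffs_def by (metis of_real_mult of_real_of_nat_eq)
qed

lemma deriv_trig_sqrt_0: "deriv (trig_sqrt 0 t) w = of_real (-t/2) * trig_sqrt 1 t w"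
proof -
  have "deriv (trig_sqrt 0 t) w = (\<Sum>n. of_real (-t/2) * (of_real (trig_sqrt_coeff 1 t n) * w^n))"
    using DERIV_imp_deriv[OF trig_sqrt_has_field_derivative]
    by (simp add: diffs_trig_sqrt_coeff_0 mult.assoc)
  also have "\<dots> = of_real (-t/2) * trig_sqrt 1 t w"
    unfolding trig_sqrt_def by (rule suminf_mult[OF summable_trig_sqrt])
  finally show ?thesis .
qed

lemma trig_sqrt_1_square: "trig_sqrt 1 t (v^2) * v = sin (of_real t * v)"
proof -
  let ?f = "\<lambda>n. sin_coeff n *\<^sub>R (of_real t * v)^n"
  have "(\<lambda>n. ?f (2*n+1)) sums sin (of_real t * v)"
  proof (rule sums_mono_reindex[THEN iffD2, OF _ _ sin_converges])
    show "strict_mono (\<lambda>n::nat. 2*n+1)" by (rule strict_monoI) simp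
    show "?f n = 0" if "n \<notin> range (\<lambda>n::nat. 2*n+1)" for n
      using that by (auto simp: sin_coeff_def elim!: oddE)
  qed
  moreover have "?f (2*n+1) = of_real (trig_sqrt_coeff 1 t n) * (v^2)^n * v" for n
  proof -
    have "(of_real t * v)^(2*n+1) = of_real t^(2*n+1) * ((v^2)^n * v)"
      by (simp add: power_mult_distrib power_add flip: power_mult)
    then show ?thesis
      by (simp add: sin_coeff_def trig_sqrt_coeff_def scaleR_conv_of_real)
  qed
  moreover have "(\<lambda>n. of_real (trig_sqrt_coeff 1 t n) * (v^2)^n * v) sums (trig_sqrt 1 t (v^2) * v)"
    unfolding trig_sqrt_def by (intro sums_mult2 summable_sums summable_trig_sqrt)
  ultimately show ?thesis by (simp add: sums_unique2)
qed

section \<open>Real restrictions of holomorphic functions\<close>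

lemma has_real_derivative_Re_holomorphic:
  assumes "G holomorphic_on S" "open S" "of_real x \<in> S"
  shows "((\<lambda>y. Re (G (of_real y))) has_real_derivative Re (deriv G (of_real x))) (at x)"
proof -
  have "((G \<circ> of_real) has_vector_derivative (1 * deriv G (of_real x))) (at x)"
    using has_vector_derivative_of_real[OF DERIV_ident[where F="at x"]]
    by (intro field_vector_diff_chain_at holomorphic_derivI[OF assms]) auto
  then have "((\<lambda>y. Re ((G \<circ> of_real) y)) has_vector_derivative Re (1 * deriv G (of_real x))) (at x)"
    by (rule bounded_linear.has_vector_derivative[OF bounded_linear_Re])
  then show ?thesis
    by (simp add: has_real_derivative_iff_has_vector_derivative o_def)
qed

lemma higher_deriv_real_restriction:
  assumes F: "F holomorphic_on S" and S: "open S" and U: "open U" and US: "of_real ` U \<subseteq> S"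
    and eq: "\<And>x. x \<in> U \<Longrightarrow> f x = Re (F (of_real x))" and x: "x \<in> U"
  shows "(deriv ^^ k) f x = Re ((deriv ^^ k) F (of_real x))"
  using x
proof (induction k arbitrary: x)
  case 0
  then show ?case using eq by simp
next
  case (Suc k)
  have "((\<lambda>y. Re ((deriv ^^ k) F (of_real y))) has_real_derivative
      Re (deriv ((deriv ^^ k) F) (of_real x))) (at x)"
    using has_real_derivative_Re_holomorphic[OF holomorphic_higher_deriv[OF F S] S] Suc.prems US
    by auto
  then have "((deriv ^^ k) f has_real_derivative Re (deriv ((deriv ^^ k) F) (of_real x))) (at x)"
    by (rule has_field_derivative_transform_within_open[OF _ U Suc.prems]) (use Suc.IH in auto)
  then show ?case using DERIV_imp_deriv by simp
qed

text \<open>Uniform continuity of (p, z) \<mapsto> F p z on a compact neighbourhood, fed into the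
  Cauchy inequality for F p - F p0.\<close>

lemma continuous_on_higher_deriv_parametric:
  fixes F :: "'a::heine_borel \<Rightarrow> complex \<Rightarrow> complex"
  assumes S: "open S" and cont: "continuous_on S (\<lambda>(p, z). F p z)"
    and holo: "\<And>p. F p holomorphic_on {z. (p, z) \<in> S}"
    and U: "\<And>p. p \<in> U \<Longrightarrow> (p, z0) \<in> S"
  shows "continuous_on U (\<lambda>p. (deriv ^^ k) (F p) z0)"
  unfolding continuous_on_iff
proof (intro ballI allI impI)
  fix p0 \<epsilon> assume "p0 \<in> U" and "\<epsilon> > (0::real)"
  obtain A B where AB: "open A" "open B" "p0 \<in> A" "z0 \<in> B" "A \<times> B \<subseteq> S"
    by (rule open_prod_elim[OF S U[OF \<open>p0 \<in> U\<close>]]) auto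
  obtain \<rho> where \<rho>: "\<rho> > 0" "cball p0 \<rho> \<subseteq> A" "cball z0 \<rho> \<subseteq> B"
  proof -
    obtain \<rho>1 where "\<rho>1 > 0" "cball p0 \<rho>1 \<subseteq> A"
      using AB(1,3) open_contains_cball by blast
    moreover obtain \<rho>2 where "\<rho>2 > 0" "cball z0 \<rho>2 \<subseteq> B"
      using AB(2,4) open_contains_cball by blast
    ultimately show thesis
      by (intro that[of "min \<rho>1 \<rho>2"]) auto
  qed
  define K where "K = cball p0 \<rho> \<times> cball z0 \<rho>"
  define \<epsilon>' where "\<epsilon>' = \<epsilon> * \<rho>^k / (2 * fact k)"
  have uc: "uniformly_continuous_on K (\<lambda>(p, z). F p z)"
    unfolding K_def using AB \<rho>
    by (intro compact_uniformly_continuous continuous_on_subset[OF cont] compact_Times) auto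
  have "\<epsilon>' > 0" unfolding \<epsilon>'_def using \<open>\<epsilon> > 0\<close> \<rho> by simp
  then obtain d where "d > 0" and
    d: "\<And>x x'. x \<in> K \<Longrightarrow> x' \<in> K \<Longrightarrow> dist x' x < d \<Longrightarrow>
          dist ((\<lambda>(p, z). F p z) x') ((\<lambda>(p, z). F p z) x) < \<epsilon>'"
    using uniformly_continuous_onE[OF uc] by blast
  have holo_B: "F p holomorphic_on B" if "p \<in> A" for p
    by (rule holomorphic_on_subset[OF holo]) (use AB that in auto)
  show "\<exists>\<delta>>0. \<forall>p\<in>U. dist p p0 < \<delta> \<longrightarrow>
          dist ((deriv ^^ k) (F p) z0) ((deriv ^^ k) (F p0) z0) < \<epsilon>"
  proof (intro exI[of _ "min d \<rho>"] conjI ballI impI)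
    fix p assume "p \<in> U" "dist p p0 < min d \<rho>"
    then have p: "p \<in> cball p0 \<rho>" "dist p p0 < d" by (auto simp: dist_commute)
    have hD: "(\<lambda>w. F p w - F p0 w) holomorphic_on B"
      using holo_B p \<rho> AB by (intro holomorphic_intros) auto
    have "norm ((deriv ^^ k) (\<lambda>w. F p w - F p0 w) z0) \<le> fact k * \<epsilon>' / \<rho>^k"
    proof (rule Cauchy_inequality)
      show "(\<lambda>w. F p w - F p0 w) holomorphic_on ball z0 \<rho>"
        by (rule holomorphic_on_subset[OF hD]) (use \<rho> in auto)
      show "continuous_on (cball z0 \<rho>) (\<lambda>w. F p w - F p0 w)"
        by (rule continuous_on_subset[OF holomorphic_on_imp_continuous_on[OF hD] \<rho>(3)])
      show "norm (F p w - F p0 w) \<le> \<epsilon>'" if "norm (z0 - w) = \<rho>" for w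
      proof -
        have "(p, w) \<in> K" "(p0, w) \<in> K"
          unfolding K_def using that p \<rho> by (auto simp: dist_norm)
        then show ?thesis
          using d[of "(p0, w)" "(p, w)"] p by (simp add: dist_Pair_Pair dist_norm)
      qed
    qed (use \<rho> in auto)
    also have "\<dots> < \<epsilon>" unfolding \<epsilon>'_def using \<rho> \<open>\<epsilon> > 0\<close> by simp
    finally show "dist ((deriv ^^ k) (F p) z0) ((deriv ^^ k) (F p0) z0) < \<epsilon>"
      using higher_deriv_diff[of "F p" B "F p0" z0 k] holo_B p \<rho> AB by (auto simp: dist_norm)
  qed (use \<open>d > 0\<close> \<rho> in auto)
qed

section \<open>The oscillatory part as a Taylor remainder\<close>

lemma norm_sin_le_exp_abs_Im: "norm (sin z) \<le> exp \<bar>Im z\<bar>"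
proof -
  have "norm (sin z) \<le> (exp (- Im z) + exp (Im z)) / 2"
    using norm_triangle_ineq4[of "exp (\<i> * z)" "exp (-(\<i> * z))"]
    by (simp add: sin_exp_eq norm_divide norm_mult norm_exp_eq_Re)
  also have "\<dots> \<le> exp \<bar>Im z\<bar>"
    by (cases "Im z \<ge> 0") auto
  finally show ?thesis .
qed

text \<open>On this disc \<open>\<bar>Im (t sqrt w)\<bar> \<le> 1/4\<close>, so the sine stays bounded while
  sqrt w stays away from 0; the radius s/(4t) is what produces the factor t^(b-1).\<close>

lemma norm_trig_sqrt_1_le:
  assumes t: "t \<ge> 1" and s: "s \<ge> 1/2" and w: "norm (w - of_real (s^2)) \<le> s / (4*t)"
  shows "norm (trig_sqrt 1 t w) \<le> 6 / s"
proof -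
  define v where "v = csqrt w"
  have vv: "v^2 = w" unfolding v_def by simp
  have Re_v: "Re v \<ge> 0" unfolding v_def by (rule Re_csqrt)
  have "s / (4*t) \<le> s/4" using s t by (intro divide_left_mono) auto
  also have "\<dots> \<le> s^2/2" using mult_right_mono[of "1/2" s s] s by (simp add: power2_eq_square)
  finally have "s / (4*t) \<le> s^2/2" .
  then have "Re w \<ge> s^2/2" and Im_w: "\<bar>Im w\<bar> \<le> s / (4*t)"
    using abs_Re_le_cmod[of "w - of_real (s^2)"] abs_Im_le_cmod[of "w - of_real (s^2)"] w by auto
  moreover have "Re w = (Re v)^2 - (Im v)^2" using Re_power2[of v] vv by simp
  ultimately have "(Re v)^2 \<ge> (s/2)^2"
    by (simp add: power_divide) (smt (verit) zero_le_power2)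
  then have Re_v_ge: "Re v \<ge> s/2" using Re_v by (rule power2_le_imp_le)
  have "s * \<bar>Im v\<bar> \<le> 2 * Re v * \<bar>Im v\<bar>" using Re_v_ge by (intro mult_right_mono) auto
  also have "\<dots> = \<bar>Im w\<bar>" using Im_power2[of v] vv Re_v by (simp add: abs_mult)
  finally have "s * \<bar>Im v\<bar> \<le> s * (1 / (4*t))" using Im_w by simp
  then have "t * \<bar>Im v\<bar> \<le> 1/4"
    using s t by (simp add: mult_le_cancel_left_pos field_simps)
  then have "norm (sin (of_real t * v)) \<le> exp (1/4)"
    using norm_sin_le_exp_abs_Im[of "of_real t * v"] t by (simp add: abs_mult order_trans)
  also have "exp (1/4::real) \<le> 3"
    using exp_le exp_le_cancel_iff[of "1/4" 1] by linarith
  finally have sin_le: "norm (sin (of_real t * v)) \<le> 3" .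
  have v_ge: "norm v \<ge> s/2" using Re_v_ge abs_Re_le_cmod[of v] by linarith
  have "trig_sqrt 1 t w = sin (of_real t * v) / v"
  proof -
    have "v \<noteq> 0" using v_ge s by auto
    then show ?thesis using trig_sqrt_1_square[of t v] vv by (simp add: eq_divide_eq)
  qed
  then have "norm (trig_sqrt 1 t w) = norm (sin (of_real t * v)) / norm v"
    by (simp add: norm_divide)
  also have "\<dots> \<le> 3 / (s/2)" using sin_le v_ge s by (intro frac_le) auto
  finally show ?thesis by simp
qed

lemma norm_higher_deriv_trig_sqrt_1_le:
  assumes "t \<ge> 1" and "s \<ge> 1/2"
  shows "norm ((deriv ^^ j) (trig_sqrt 1 t) (of_real (s^2))) \<le> fact j * (6/s) / (s/(4*t))^j"
proof (rule Cauchy_inequality)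
  show "trig_sqrt 1 t holomorphic_on ball (of_real (s^2)) (s/(4*t))"
    by (rule holomorphic_trig_sqrt)
  show "continuous_on (cball (of_real (s^2)) (s/(4*t))) (trig_sqrt 1 t)"
    by (rule holomorphic_on_imp_continuous_on[OF holomorphic_trig_sqrt])
  show "norm (trig_sqrt 1 t w) \<le> 6/s" if "norm (of_real (s^2) - w) = s/(4*t)" for w
    using norm_trig_sqrt_1_le[OF assms, of w] that by (simp add: norm_minus_commute)
qed (use assms in auto)

lemma higher_deriv_sincE:
  "(deriv ^^ j) (sincE t) x = Re ((deriv ^^ j) (trig_sqrt 1 t) (of_real x))"
  by (rule higher_deriv_real_restriction[OF holomorphic_trig_sqrt open_UNIV open_UNIV])
    (auto simp: sincE_eq_trig_sqrt)

lemma higher_deriv_sincE_has_real_derivative: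
  "((deriv ^^ j) (sincE t) has_real_derivative (deriv ^^ Suc j) (sincE t) x) (at x)"
proof -
  have "((\<lambda>y. Re ((deriv ^^ j) (trig_sqrt 1 t) (of_real y))) has_real_derivative
      Re (deriv ((deriv ^^ j) (trig_sqrt 1 t)) (of_real x))) (at x)"
    by (rule has_real_derivative_Re_holomorphic
        [OF holomorphic_higher_deriv[OF holomorphic_trig_sqrt open_UNIV]]) auto
  then show ?thesis
    unfolding higher_deriv_sincE[abs_def] by simp
qed

lemma continuous_on_higher_deriv_sincE [continuous_intros]:
  "continuous_on S f \<Longrightarrow> continuous_on S (\<lambda>x. (deriv ^^ k) (sincE t) (f x))"
  by (rule continuous_on_compose2[of UNIV, OF DERIV_continuous_on])
    (auto intro: has_field_derivative_at_within[OF higher_deriv_sincE_has_real_derivative])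

lemma continuous_on_sincE [continuous_intros]:
  "continuous_on S f \<Longrightarrow> continuous_on S (\<lambda>x. sincE t (f x))"
  using continuous_on_higher_deriv_sincE[of S f 0] by simp

lemma higher_deriv_fF:
  "(deriv ^^ Suc k) (\<lambda>c. fF r c t) 0 = (-1)^k * (t/2) * (deriv ^^ k) (sincE t) (r^2)"
proof -
  define G where "G = (\<lambda>w. trig_sqrt 0 t ((-1) * w + of_real (r^2)))"
  have G: "G holomorphic_on UNIV" unfolding G_def
    by (rule holomorphic_on_compose_gen[OF _ holomorphic_trig_sqrt, unfolded o_def])
      (auto intro!: holomorphic_intros)
  have "(deriv ^^ Suc k) (\<lambda>c. fF r c t) 0 = Re ((deriv ^^ Suc k) G (of_real 0))"
    by (rule higher_deriv_real_restriction[OF G open_UNIV open_UNIV])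
      (auto simp: G_def fF_def cosE_eq_trig_sqrt)
  also have "(deriv ^^ Suc k) G (of_real 0) = (-1)^Suc k * (deriv ^^ Suc k) (trig_sqrt 0 t) (of_real (r^2))"
    unfolding G_def
    by (subst higher_deriv_compose_linear'[OF holomorphic_trig_sqrt open_UNIV open_UNIV]) auto
  also have "(deriv ^^ Suc k) (trig_sqrt 0 t) = (deriv ^^ k) (\<lambda>w. of_real (-t/2) * trig_sqrt 1 t w)"
    by (simp add: funpow_Suc_right deriv_trig_sqrt_0[abs_def] del: funpow.simps)
  also have "(deriv ^^ k) (\<lambda>w. of_real (-t/2) * trig_sqrt 1 t w) (of_real (r^2))
      = of_real (-t/2) * (deriv ^^ k) (trig_sqrt 1 t) (of_real (r^2))"
    by (rule higher_deriv_cmult[OF holomorphic_trig_sqrt[of 1 t UNIV]]) auto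
  finally show ?thesis by (simp add: higher_deriv_sincE)
qed

lemma W2_eq_Taylor_polynomial:
  assumes "t > 0"
  shows "W2 b \<xi> t = (\<Sum>k<b-1. (deriv ^^ k) (sincE t) (norm \<xi>^2) / fact k * (-1/4)^k)"
proof (cases "b \<ge> 2")
  case True
  then have "{0..b-2} = {..<b-1}" by auto
  then have "W2 b \<xi> t =
      (\<Sum>k<b-1. 2 / t * ((1/4)^k / fact k * ((-1)^k * (t/2) * (deriv ^^ k) (sincE t) (norm \<xi>^2))))"
    by (simp add: W2_def True higher_deriv_fF sum_distrib_left del: funpow.simps)
  also have "\<dots> = (\<Sum>k<b-1. (deriv ^^ k) (sincE t) (norm \<xi>^2) / fact k * (-1/4)^k)"
    using assms by (intro sum.cong refl) (simp add: power_minus' power_divide field_simps)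
  finally show ?thesis .
qed (simp add: W2_def)

lemma sincE_minus_W2_Lagrange_remainder:
  assumes t: "t > 0" and b: "b \<ge> 1"
  obtains \<tau> where "norm \<xi>^2 - 1/4 \<le> \<tau>" "\<tau> \<le> norm \<xi>^2"
    "sincE t (norm \<xi>^2 - 1/4) - W2 b \<xi> t = (deriv ^^ (b-1)) (sincE t) \<tau> * (-1/4)^(b-1) / fact (b-1)"
proof (cases "b \<ge> 2")
  case False
  then show ?thesis using b that[of "norm \<xi>^2 - 1/4"] by (simp add: W2_def)
next
  case True
  have "\<exists>\<tau>>norm \<xi>^2 - 1/4. \<tau> < norm \<xi>^2 \<and> sincE t (norm \<xi>^2 - 1/4) =
      (\<Sum>m<b-1. (deriv ^^ m) (sincE t) (norm \<xi>^2) / fact m * (norm \<xi>^2 - 1/4 - norm \<xi>^2)^m)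
       + (deriv ^^ (b-1)) (sincE t) \<tau> / fact (b-1) * (norm \<xi>^2 - 1/4 - norm \<xi>^2)^(b-1)"
    by (rule Taylor_down[where b = "norm \<xi>^2"])
      (use True higher_deriv_sincE_has_real_derivative in auto)
  then obtain \<tau> where "norm \<xi>^2 - 1/4 < \<tau>" "\<tau> < norm \<xi>^2"
    "sincE t (norm \<xi>^2 - 1/4) = (\<Sum>m<b-1. (deriv ^^ m) (sincE t) (norm \<xi>^2) / fact m * (-1/4)^m)
       + (deriv ^^ (b-1)) (sincE t) \<tau> / fact (b-1) * (-1/4)^(b-1)"
    by auto
  then show ?thesis
    using W2_eq_Taylor_polynomial[OF t, of b \<xi>] by (intro that[of \<tau>]) auto
qed

lemma abs_sincE_minus_W2_le:
  assumes t: "t \<ge> 1" and b: "b \<ge> 1" and r: "norm \<xi> \<ge> 1"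
  shows "\<bar>sincE t (norm \<xi>^2 - 1/4) - W2 b \<xi> t\<bar> \<le> 6 * 2^b * t^(b-1) / norm \<xi> ^ b"
proof -
  let ?r = "norm \<xi>"
  define n where "n = b - 1"
  obtain \<tau> where \<tau>: "?r^2 - 1/4 \<le> \<tau>" "\<tau> \<le> ?r^2"
    and rem: "sincE t (?r^2 - 1/4) - W2 b \<xi> t = (deriv ^^ n) (sincE t) \<tau> * (-1/4)^n / fact n"
    using sincE_minus_W2_Lagrange_remainder[of t b \<xi>] t b unfolding n_def by auto
  define s where "s = sqrt \<tau>"
  have "?r^2 \<ge> 1" using r by (simp add: one_le_power)
  then have "\<tau> \<ge> (?r/2)^2" using \<tau>(1) by (simp add: power_divide)
  then have s_ge: "?r/2 \<le> s" and s_sq: "s^2 = \<tau>"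
    unfolding s_def using order_trans[OF zero_le_power2] by (blast intro: real_le_rsqrt, simp)
  have s_pos: "s \<ge> 1/2" using s_ge r by linarith
  have "\<bar>(deriv ^^ n) (sincE t) \<tau>\<bar> \<le> norm ((deriv ^^ n) (trig_sqrt 1 t) (of_real (s^2)))"
    using abs_Re_le_cmod by (simp add: higher_deriv_sincE s_sq)
  also have "\<dots> \<le> fact n * (6/s) / (s/(4*t))^n"
    by (rule norm_higher_deriv_trig_sqrt_1_le[OF t s_pos])
  finally have deriv_le: "\<bar>(deriv ^^ n) (sincE t) \<tau>\<bar> \<le> fact n * (6/s) / (s/(4*t))^n" .
  have "\<bar>sincE t (?r^2 - 1/4) - W2 b \<xi> t\<bar> = \<bar>(deriv ^^ n) (sincE t) \<tau>\<bar> * (1/4)^n / fact n"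
    unfolding rem by (simp add: abs_mult abs_divide power_abs)
  also have "\<dots> \<le> (fact n * (6/s) / (s/(4*t))^n) * (1/4)^n / fact n"
    by (intro divide_right_mono mult_right_mono deriv_le) auto
  also have "\<dots> = 6 * t^n / s^Suc n"
    using s_pos t by (simp add: field_simps power_divide power_mult_distrib)
  also have "\<dots> \<le> 6 * t^n / (?r/2)^Suc n"
    using s_ge r t by (intro divide_left_mono power_mono mult_pos_pos zero_less_power) auto
  also have "\<dots> = 6 * 2^b * t^(b-1) / ?r^b"
    using b unfolding n_def by (simp add: power_divide field_simps)
  finally show ?thesis .
qed

section \<open>The Gaussian part D2\<close>

definition hH_complex :: "real \<Rightarrow> real \<Rightarrow> complex \<Rightarrow> complex" where
  "hH_complex r t a = 1 / csqrt (1 - 4*a* of_real (r^2)) *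
     exp (- (2 * of_real t * of_real (r^2)) / (1 + csqrt (1 - 4*a* of_real (r^2))))"

lemma hH_complex_domain:
  assumes "4 * r^2 * norm a < 1"
  shows "1 - 4*a* of_real (r^2) \<notin> \<real>\<^sub>\<le>\<^sub>0" "csqrt (1 - 4*a* of_real (r^2)) \<noteq> 0"
    "1 + csqrt (1 - 4*a* of_real (r^2)) \<noteq> 0"
proof -
  have "4 * Re a * r^2 \<le> 4 * r^2 * norm a"
    using mult_right_mono[OF abs_le_D1[OF abs_Re_le_cmod[of a]], of "4*r^2"] by (simp add: mult_ac)
  then have Re_pos: "Re (1 - 4*a* of_real (r^2)) > 0" using assms by simp
  then show "1 - 4*a* of_real (r^2) \<notin> \<real>\<^sub>\<le>\<^sub>0" by (auto simp: complex_nonpos_Reals_iff)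
  show "csqrt (1 - 4*a* of_real (r^2)) \<noteq> 0"
    using Re_pos by (metis csqrt_eq_0 zero_complex.sel(1) less_irrefl)
  have "Re (1 + csqrt (1 - 4*a* of_real (r^2))) \<ge> 1"
    using Re_csqrt[of "1 - 4*a* of_real (r^2)"] unfolding plus_complex.sel one_complex.sel by linarith
  then show "1 + csqrt (1 - 4*a* of_real (r^2)) \<noteq> 0"
    by (metis zero_complex.sel(1) zero_less_one not_le)
qed

lemma holomorphic_hH_complex: "hH_complex r t holomorphic_on {a. 4 * r^2 * norm a < 1}"
  unfolding hH_complex_def[abs_def] using hH_complex_domain
  by (intro holomorphic_intros) auto

lemma continuous_on_hH_complex:
  "continuous_on {(r, a). 4 * r^2 * norm a < 1} (\<lambda>(r, a). hH_complex r t a)"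
proof -
  have "continuous_on {(r, a). 4 * r^2 * norm a < 1} (\<lambda>(r, a). csqrt (1 - 4*a* of_real (r^2)))"
    unfolding case_prod_unfold
    by (rule continuous_on_compose2[OF continuous_on_csqrt])
      (use hH_complex_domain in \<open>auto intro!: continuous_intros\<close>)
  then show ?thesis
    unfolding hH_complex_def case_prod_unfold using hH_complex_domain
    by (intro continuous_intros) (auto simp: case_prod_unfold)
qed

lemma hH_complex_of_real:
  assumes "4 * r^2 * \<bar>x\<bar> < 1"
  shows "hH_complex r t (of_real x) = of_real (hH r x t)"
proof -
  have "x * (4*r^2) \<le> \<bar>x\<bar> * (4*r^2)" by (intro mult_right_mono) auto
  then have "1 - 4*x*r^2 \<ge> 0" using assms by (simp add: algebra_simps)
  moreover have "1 - 4 * of_real x * of_real (r^2) = (of_real (1 - 4*x*r^2) :: complex)" by simp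
  ultimately show ?thesis
    unfolding hH_complex_def hH_def by (simp add: csqrt_of_real exp_of_real[symmetric])
qed

lemma norm_csqrt_minus_1_le: "norm (csqrt z - 1) \<le> norm (z - 1)"
proof -
  have "norm (csqrt z + 1) \<ge> 1"
    using abs_Re_le_cmod[of "csqrt z + 1"] Re_csqrt[of z]
    unfolding plus_complex.sel one_complex.sel by linarith
  moreover have "norm (csqrt z - 1) * norm (csqrt z + 1) = norm (z - 1)"
    by (simp flip: norm_mult add: algebra_simps power2_eq_square[symmetric])
  ultimately show ?thesis
    by (metis mult_left_mono mult.right_neutral norm_ge_zero)
qed

lemma Re_inverse_two_plus_ge:
  assumes "norm e \<le> 1/2"
  shows "Re (1 / (2 + e)) \<ge> 2/5"
proof -
  have "\<bar>Re e\<bar> \<le> 1/2" using abs_Re_le_cmod[of e] assms by linarith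
  moreover have "(Re e)^2 + (Im e)^2 \<le> 1/4"
    using power_mono[OF assms norm_ge_zero, of 2] by (simp add: cmod_power2 power_divide)
  ultimately have "2 * ((2 + Re e)^2 + (Im e)^2) \<le> 5 * (2 + Re e)" and "2 + Re e > 0"
    by (auto simp: power2_eq_square algebra_simps)
  then show ?thesis
    by (simp add: Re_divide divide_simps power2_eq_square) (smt (verit) zero_le_square)
qed

text \<open>The constant 2/5 in Re_inverse_two_plus_ge yields the exponent -(4/5) t r^2, and
  4/5 > 1/2 is what lets this Gaussian absorb the factor exp (-t/2).\<close>

lemma norm_hH_complex_le:
  assumes r: "r > 0" and t: "t \<ge> 0" and a: "norm a = 1 / (8 * r^2)"
  shows "norm (hH_complex r t a) \<le> 2 * exp (-(4/5) * t * r^2)"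
proof -
  define v where "v = csqrt (1 - 4*a* of_real (r^2))"
  have "norm ((1 - 4*a* of_real (r^2)) - 1) = 1/2"
    using a r by (simp add: norm_mult norm_power)
  then have "norm (v - 1) \<le> 1/2"
    using norm_csqrt_minus_1_le[of "1 - 4*a* of_real (r^2)"] unfolding v_def by simp
  then have v: "norm v \<ge> 1/2" and Re_v: "Re (1 / (1 + v)) \<ge> 2/5"
    using norm_triangle_ineq2[of 1 v] Re_inverse_two_plus_ge[of "v - 1"]
    by (auto simp: norm_minus_commute algebra_simps)
  have "Re (- (2 * of_real t * of_real (r^2)) / (1 + v)) = - (2*t*r^2) * Re (1 / (1 + v))"
    by (simp add: Re_divide)
  also have "\<dots> \<le> -(4/5) * t * r^2"
    using mult_left_mono[OF Re_v, of "2*t*r^2"] t by simp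
  finally have "norm (hH_complex r t a) \<le> 1 / norm v * exp (-(4/5) * t * r^2)"
    unfolding hH_complex_def v_def[symmetric] using v
    by (simp add: norm_mult norm_divide divide_right_mono)
  also have "\<dots> \<le> 2 * exp (-(4/5) * t * r^2)"
    using v by (intro mult_right_mono) (auto simp: divide_le_eq)
  finally show ?thesis .
qed

lemma norm_higher_deriv_hH_complex_le:
  assumes r: "r > 0" and t: "t \<ge> 0"
  shows "norm ((deriv ^^ k) (hH_complex r t) 0) \<le> fact k * 2 * exp (-(4/5) * t * r^2) * (8 * r^2)^k"
proof -
  have sub: "cball 0 (1 / (8 * r^2)) \<subseteq> {a. 4 * r^2 * norm a < 1}"
    using r by (auto simp: field_simps)
  have "norm ((deriv ^^ k) (hH_complex r t) 0) \<le> fact k * (2 * exp (-(4/5) * t * r^2)) / (1 / (8 * r^2))^k"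
  proof (rule Cauchy_inequality)
    show "hH_complex r t holomorphic_on ball 0 (1 / (8 * r^2))"
      by (rule holomorphic_on_subset[OF holomorphic_hH_complex order_trans[OF ball_subset_cball sub]])
    show "continuous_on (cball 0 (1 / (8 * r^2))) (hH_complex r t)"
      by (rule continuous_on_subset[OF holomorphic_on_imp_continuous_on[OF holomorphic_hH_complex] sub])
  qed (use norm_hH_complex_le[OF r t] r in auto)
  then show ?thesis by (simp add: power_divide field_simps)
qed

lemma higher_deriv_hH:
  "(deriv ^^ k) (\<lambda>a. hH r a t) 0 = Re ((deriv ^^ k) (hH_complex r t) 0)"
proof -
  have "(deriv ^^ k) (\<lambda>a. hH r a t) 0 = Re ((deriv ^^ k) (hH_complex r t) (of_real 0))"
  proof (rule higher_deriv_real_restriction[OF holomorphic_hH_complex])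
    show "open {a. 4 * r^2 * norm a < (1::real)}" "open {x. 4 * r^2 * \<bar>x\<bar> < (1::real)}"
      by (intro open_Collect_less continuous_intros)+
  qed (auto simp: hH_complex_of_real)
  then show ?thesis by simp
qed

lemma continuous_higher_deriv_hH_complex: "continuous_on UNIV (\<lambda>r. (deriv ^^ k) (hH_complex r t) 0)"
proof (rule continuous_on_higher_deriv_parametric[OF _ continuous_on_hH_complex])
  show "open {(r, a). 4 * r^2 * norm a < (1::real)}"
    unfolding case_prod_unfold by (intro open_Collect_less continuous_intros)
qed (use holomorphic_hH_complex in auto)

lemma abs_D2_le_exp:
  assumes t: "t \<ge> 0" and r: "norm \<xi> \<ge> 1"
  shows "\<bar>D2 l \<xi> t\<bar> \<le> 2 * real l * (8 * norm \<xi>^2)^l * exp (-(4/5) * t * norm \<xi>^2)"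
proof -
  let ?r = "norm \<xi>"
  have "\<bar>1 / fact k * (deriv ^^ k) (\<lambda>a. hH ?r a t) 0\<bar> \<le> 2 * (8 * ?r^2)^l * exp (-(4/5) * t * ?r^2)"
    if "k < l" for k
  proof -
    have "\<bar>(deriv ^^ k) (\<lambda>a. hH ?r a t) 0\<bar> \<le> norm ((deriv ^^ k) (hH_complex ?r t) 0)"
      by (simp add: higher_deriv_hH abs_Re_le_cmod)
    also have "\<dots> \<le> fact k * 2 * exp (-(4/5) * t * ?r^2) * (8 * ?r^2)^k"
      by (rule norm_higher_deriv_hH_complex_le) (use r t in auto)
    finally have coeff_le: "\<bar>(deriv ^^ k) (\<lambda>a. hH ?r a t) 0\<bar> / fact k
        \<le> 2 * exp (-(4/5) * t * ?r^2) * (8 * ?r^2)^k"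
      by (simp add: divide_le_eq mult_ac)
    have "(8 * ?r^2)^k \<le> (8 * ?r^2)^l"
      using that one_le_power[OF r, of 2] by (intro power_increasing) auto
    then have "2 * exp (-(4/5) * t * ?r^2) * (8 * ?r^2)^k \<le> 2 * (8 * ?r^2)^l * exp (-(4/5) * t * ?r^2)"
      using mult_left_mono[of _ _ "2 * exp (-(4/5) * t * ?r^2)"] by (simp add: mult_ac)
    moreover have "\<bar>1 / fact k * (deriv ^^ k) (\<lambda>a. hH ?r a t) 0\<bar>
        = \<bar>(deriv ^^ k) (\<lambda>a. hH ?r a t) 0\<bar> / fact k"
      by (simp add: abs_mult)
    ultimately show ?thesis using coeff_le by linarith
  qed
  then have "\<bar>D2 l \<xi> t\<bar> \<le> (\<Sum>k<l. 2 * (8 * ?r^2)^l * exp (-(4/5) * t * ?r^2))"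
    unfolding D2_def by (intro order_trans[OF sum_abs] sum_mono) auto
  then show ?thesis by simp
qed

lemma power_div_fact_le_exp:
  assumes "x \<ge> 0"
  shows "x^N / fact N \<le> exp (x::real)"
proof -
  have "(\<lambda>n. x^n / fact n) sums exp x"
    using exp_converges[of x] by (simp add: divide_inverse_commute)
  then show ?thesis
    using sum_le_suminf[of "\<lambda>n. x^n / fact n" "{N}"] assms by (simp add: sums_iff)
qed

lemma power_mult_exp_neg_square_le:
  fixes r c :: real
  assumes r: "r \<ge> 1" and c: "c > 0"
  shows "r^N * exp (-c * r^2) \<le> fact N / c^N"
proof -
  have "r^N \<le> r^(2*N)" by (rule power_increasing) (use r in auto)
  also have "\<dots> = (r^2)^N" by (simp add: power_mult)
  also have "\<dots> = (c * r^2)^N / c^N" using c by (simp add: power_mult_distrib)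
  also have "\<dots> \<le> fact N * exp (c * r^2) / c^N"
    using power_div_fact_le_exp[of "c * r^2" N] c by (intro divide_right_mono) (auto simp: field_simps)
  finally show ?thesis by (simp add: exp_minus field_simps)
qed

lemma abs_D2_le_inverse_power:
  assumes t: "t \<ge> 1" and r: "norm \<xi> \<ge> 1"
  shows "\<bar>D2 l \<xi> t\<bar> \<le> 2 * real l * 8^l * fact (b + 2*l) * (10/3)^(b + 2*l) * t^(b-1) * exp (-t/2) / norm \<xi> ^ b"
proof -
  let ?r = "norm \<xi>" and ?N = "b + 2*l"
  have r2: "?r^2 \<ge> 1" using one_le_power[OF r] by blast
  have "\<xi> \<noteq> 0" using r by auto
  have "t \<le> t * ?r^2" and "?r^2 \<le> t * ?r^2"
    using mult_left_mono[OF r2, of t] mult_right_mono[OF t, of "?r^2"] t by simp_all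
  then have "t/2 + 3/10 * ?r^2 \<le> 4/5 * t * ?r^2" by linarith
  then have exp_split: "exp (-(4/5) * t * ?r^2) \<le> exp (-t/2) * exp (-(3/10) * ?r^2)"
    by (simp flip: exp_add)
  have "(8 * ?r^2)^l * exp (-(4/5) * t * ?r^2)
      \<le> exp (-t/2) * ((8 * ?r^2)^l * exp (-(3/10) * ?r^2))"
    using mult_left_mono[OF exp_split, of "(8 * ?r^2)^l"] by (simp add: mult_ac)
  also have "(8 * ?r^2)^l * exp (-(3/10) * ?r^2) = 8^l * (?r^?N * exp (-(3/10) * ?r^2)) / ?r^b"
    using \<open>\<xi> \<noteq> 0\<close> by (simp add: power_mult_distrib power_add field_simps flip: power_mult)
  also have "?r^?N * exp (-(3/10) * ?r^2) \<le> fact ?N * (10/3)^?N"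
    using power_mult_exp_neg_square_le[OF r, of "3/10" ?N] by (simp add: power_divide)
  finally have "(8 * ?r^2)^l * exp (-(4/5) * t * ?r^2)
      \<le> 1 * (8^l * fact ?N * (10/3)^?N * exp (-t/2) / ?r^b)"
    by (simp add: divide_right_mono mult_ac)
  also have "\<dots> \<le> t^(b-1) * (8^l * fact ?N * (10/3)^?N * exp (-t/2) / ?r^b)"
    using t by (intro mult_right_mono) (auto simp: one_le_power)
  finally have "(8 * ?r^2)^l * exp (-(4/5) * t * ?r^2)
      \<le> 8^l * fact ?N * (10/3)^?N * t^(b-1) * exp (-t/2) / ?r^b"
    by (simp add: mult_ac)
  then have "2 * real l * ((8 * ?r^2)^l * exp (-(4/5) * t * ?r^2))
      \<le> 2 * real l * (8^l * fact ?N * (10/3)^?N * t^(b-1) * exp (-t/2) / ?r^b)"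
    by (rule mult_left_mono) simp
  then show ?thesis
    using abs_D2_le_exp[of t \<xi> l] t r by (simp add: mult_ac)
qed

section \<open>Integrability of negative powers of 1 + |x|^2\<close>

lemma integrable_powr_Ici:
  assumes "e < -1"
  shows "integrable lborel (\<lambda>x::real. indicator {1..} x * x powr e)"
proof -
  have "(\<lambda>x. x powr e) integrable_on {1..}"
    using has_integral_powr_to_inf[OF assms, of 1] by (auto simp: integrable_on_def)
  then have "set_integrable lebesgue {1..} (\<lambda>x. x powr e)"
    unfolding set_integrable_def
    by (rule nonnegative_absolutely_integrable_1[unfolded set_integrable_def]) simp
  then show ?thesis
    unfolding set_integrable_def
    by (subst (asm) integrable_completion)
      (auto intro!: borel_measurable_continuous_on_indicator continuous_intros)
qed

lemma integrable_one_plus_square_powr: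
  assumes p: "p > 1/2"
  shows "integrable lborel (\<lambda>x::real. (1 + x^2) powr (-p))"
proof -
  define G where "G = (\<lambda>x::real. indicator {1..} x * x powr (-2*p))"
  have G: "integrable lborel G"
    using integrable_powr_Ici[of "-2*p"] p by (simp add: G_def)
  have G_refl: "integrable lborel (\<lambda>x. G (-x))"
    using lborel_integrable_real_affine[OF G, of "-1" 0] by simp
  have G_nonneg: "G y \<ge> 0" for y unfolding G_def by (auto simp: indicator_def)
  show ?thesis
  proof (rule Bochner_Integration.integrable_bound[OF _ _ AE_I2])
    show "integrable lborel (\<lambda>x. indicator {-1..1} x + G x + G (-x))"
      using G G_refl by (intro Bochner_Integration.integrable_add borel_integrable_atLeastAtMost) auto
    show "(\<lambda>x::real. (1 + x^2) powr (-p)) \<in> borel_measurable lborel" by measurable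
    fix x :: real
    have "(1 + x^2) powr (-p) \<le> 1"
      using powr_mono2'[of "-p" 1 "1 + x^2"] p by simp
    moreover have "(1 + x^2) powr (-p) \<le> \<bar>x\<bar> powr (-2*p)" if "\<bar>x\<bar> \<ge> 1"
    proof -
      have "(1 + x^2) powr (-p) \<le> (x^2) powr (-p)"
        using that p by (intro powr_mono2') (auto simp: abs_square_le_1)
      also have "(x^2) powr (-p) = (\<bar>x\<bar> powr 2) powr (-p)" by simp
      also have "\<dots> = \<bar>x\<bar> powr (-2*p)" unfolding powr_powr by simp
      finally show ?thesis .
    qed
    ultimately have "(1 + x^2) powr (-p) \<le> indicator {-1..1} x + G x + G (-x)"
      using G_nonneg[of x] G_nonneg[of "-x"] by (auto simp: G_def indicator_def abs_if)
    then show "norm ((1 + x^2) powr (-p)) \<le> norm (indicator {-1..1} x + G x + G (-x))"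
      by simp
  qed
qed

lemma integrable_prod_Basis:
  fixes g :: "real \<Rightarrow> real"
  assumes g: "integrable lborel g" and g_nonneg: "\<And>y. g y \<ge> 0"
  shows "integrable (lborel::'a::euclidean_space measure) (\<lambda>x. \<Prod>b\<in>Basis. g (x \<bullet> b))"
  unfolding integrable_iff_bounded
proof
  have g_meas: "g \<in> borel_measurable borel" using borel_measurable_integrable[OF g] by simp
  then show "(\<lambda>x::'a. \<Prod>b\<in>Basis. g (x \<bullet> b)) \<in> borel_measurable lborel" by measurable
  have "(\<integral>\<^sup>+x. ennreal (norm (\<Prod>b\<in>Basis. g (x \<bullet> b))) \<partial>(lborel::'a measure)) =
        (\<integral>\<^sup>+x. (\<Prod>b\<in>Basis. ennreal (g (x \<bullet> b))) \<partial>(lborel::'a measure))"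
    by (intro nn_integral_cong) (simp add: g_nonneg prod_nonneg prod_ennreal)
  also have "\<dots> = (\<Prod>b\<in>(Basis::'a set). \<integral>\<^sup>+y. ennreal (g y) \<partial>lborel)"
    using g_meas by (intro nn_integral_lborel_prod) auto
  also have "\<dots> < \<infinity>"
    using g g_nonneg unfolding integrable_iff_bounded by (simp add: power_less_top_ennreal)
  finally show "(\<integral>\<^sup>+x. ennreal (norm (\<Prod>b\<in>Basis. g (x \<bullet> b))) \<partial>(lborel::'a measure)) < \<infinity>" .
qed

lemma integrable_one_plus_norm_square_powr:
  assumes s: "s > DIM('a) / 2"
  shows "integrable (lborel::'a::euclidean_space measure) (\<lambda>x. (1 + norm x ^ 2) powr (-s))"
proof -
  define p where "p = s / DIM('a)"
  have p: "p > 1/2" unfolding p_def using s by (simp add: field_simps)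
  show ?thesis
  proof (rule Bochner_Integration.integrable_bound[OF _ _ AE_I2])
    show "integrable lborel (\<lambda>x::'a. \<Prod>b\<in>Basis. (1 + (x \<bullet> b)^2) powr (-p))"
      by (rule integrable_prod_Basis[OF integrable_one_plus_square_powr[OF p]]) simp
    show "(\<lambda>x::'a. (1 + norm x ^ 2) powr (-s)) \<in> borel_measurable lborel" by measurable
    fix x :: 'a
    have "(1 + norm x ^ 2) powr (-s) = (\<Prod>b\<in>(Basis::'a set). (1 + norm x ^ 2) powr (-p))"
      using powr_power[of "1 + norm x ^ 2" "-p" "DIM('a)"] add_pos_nonneg[of 1 "norm x ^ 2"]
      by (simp add: p_def)
    also have "\<dots> \<le> (\<Prod>b\<in>Basis. (1 + (x \<bullet> b)^2) powr (-p))"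
    proof (rule prod_mono)
      fix b :: 'a assume "b \<in> Basis"
      then have "(x \<bullet> b)^2 \<le> norm x ^ 2"
        using Basis_le_norm power_mono abs_ge_zero power2_abs by metis
      then show "0 \<le> (1 + norm x ^ 2) powr (-p) \<and> (1 + norm x ^ 2) powr (-p) \<le> (1 + (x \<bullet> b)^2) powr (-p)"
        using p by (auto intro!: powr_mono2' add_pos_nonneg)
    qed
    finally show "norm ((1 + norm x ^ 2) powr (-s)) \<le> norm (\<Prod>b\<in>Basis. (1 + (x \<bullet> b)^2) powr (-p))"
      by (simp add: prod_nonneg)
  qed
qed

section \<open>The L2 estimate\<close>

definition m2_bound_const :: "nat \<Rightarrow> nat \<Rightarrow> real" where
  "m2_bound_const b l = 6 * 2^b + 2 * real l * 8^l * fact (b + 2*l) * (10/3)^(b + 2*l)"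

lemma abs_m2_le:
  assumes t: "t \<ge> 1" and b: "b \<ge> 1" and r: "norm \<xi> \<ge> 1" and M: "\<bar>chiH (norm \<xi>)\<bar> \<le> M"
  shows "\<bar>m2 chiH b l \<xi> t\<bar> \<le> M * m2_bound_const b l * t^(b-1) * exp (-t/2) / norm \<xi> ^ b"
proof -
  let ?r = "norm \<xi>"
  let ?X = "exp (-t/2) * (sincE t (?r^2 - 1/4) - W2 b \<xi> t)"
  have "\<bar>?X - D2 l \<xi> t\<bar> \<le> \<bar>?X\<bar> + \<bar>D2 l \<xi> t\<bar>" by (rule abs_triangle_ineq4)
  also have "\<dots> \<le> exp (-t/2) * (6 * 2^b * t^(b-1) / ?r^b)
      + 2 * real l * 8^l * fact (b + 2*l) * (10/3)^(b + 2*l) * t^(b-1) * exp (-t/2) / ?r^b"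
    using mult_left_mono[OF abs_sincE_minus_W2_le[OF t b r], of "exp (-t/2)"] abs_D2_le_inverse_power[OF t r]
    by (intro add_mono) (auto simp: abs_mult)
  also have "\<dots> = m2_bound_const b l * t^(b-1) * exp (-t/2) / ?r^b"
    by (simp add: m2_bound_const_def add_divide_distrib algebra_simps)
  finally have bound: "\<bar>?X - D2 l \<xi> t\<bar> \<le> m2_bound_const b l * t^(b-1) * exp (-t/2) / ?r^b" .
  have "\<bar>m2 chiH b l \<xi> t\<bar>
      = \<bar>chiH ?r\<bar> * \<bar>exp (-t/2) * (sincE t (?r^2 - 1/4) - W2 b \<xi> t) - D2 l \<xi> t\<bar>"
    by (simp only: m2_def abs_mult right_diff_distrib[of "exp (-t/2)"])
  also have "\<dots> \<le> M * (m2_bound_const b l * t^(b-1) * exp (-t/2) / ?r^b)"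
    using M by (intro mult_mono bound) auto
  finally show ?thesis by simp
qed

text \<open>The indicator hides chiH on the negative reals, where nothing is assumed about it.\<close>

lemma borel_measurable_m2:
  fixes chiH :: "real \<Rightarrow> real"
  assumes t: "t > 0" and chiH: "continuous_on {0<..} chiH" "chiH 0 = 0"
  shows "(\<lambda>\<xi>::'a::euclidean_space. m2 chiH b l \<xi> t) \<in> borel_measurable borel"
proof -
  define G where "G r = exp (-t/2) * sincE t (r^2 - 1/4)
      - exp (-t/2) * (\<Sum>k<b-1. (deriv ^^ k) (sincE t) (r^2) / fact k * (-1/4)^k)
      - (\<Sum>k<l. 1 / fact k * Re ((deriv ^^ k) (hH_complex r t) 0))" for r
  have "continuous_on UNIV G"
    unfolding G_def by (intro continuous_intros continuous_higher_deriv_hH_complex) auto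
  then have "G \<in> borel_measurable borel" by (rule borel_measurable_continuous_onI)
  moreover have "(\<lambda>r. indicator {0<..} r *\<^sub>R chiH r) \<in> borel_measurable borel"
    by (rule borel_measurable_continuous_on_indicator[OF _ chiH(1)]) auto
  moreover have "m2 chiH b l \<xi> t = indicator {0<..} (norm \<xi>) *\<^sub>R chiH (norm \<xi>) * G (norm \<xi>)"
    for \<xi> :: 'a
    using chiH(2)
    by (auto simp: m2_def G_def W2_eq_Taylor_polynomial[OF t] D2_def higher_deriv_hH indicator_def)
  ultimately show ?thesis by simp
qed

lemma integrable_square_and_sqrt_integral_le:
  fixes f g :: "'a \<Rightarrow> real"
  assumes f: "f \<in> borel_measurable M" and g: "integrable M g" and c: "c \<ge> 0"
    and le: "\<And>x. (f x)^2 \<le> c^2 * g x"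
  shows "integrable M (\<lambda>x. (f x)^2) \<and> sqrt (\<integral>x. (f x)^2 \<partial>M) \<le> c * sqrt (\<integral>x. g x \<partial>M)"
proof
  have cg: "integrable M (\<lambda>x. c^2 * g x)" using g by simp
  show int: "integrable M (\<lambda>x. (f x)^2)"
    using le order_trans[OF zero_le_power2 le]
    by (intro Bochner_Integration.integrable_bound[OF cg _ AE_I2]) (use f in auto)
  have "(\<integral>x. (f x)^2 \<partial>M) \<le> (\<integral>x. c^2 * g x \<partial>M)"
    by (rule integral_mono[OF int cg le])
  then have "sqrt (\<integral>x. (f x)^2 \<partial>M) \<le> sqrt (c^2 * (\<integral>x. g x \<partial>M))"
    by (simp add: real_sqrt_le_mono)
  also have "\<dots> = c * sqrt (\<integral>x. g x \<partial>M)" using c by (simp add: real_sqrt_mult)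
  finally show "sqrt (\<integral>x. (f x)^2 \<partial>M) \<le> c * sqrt (\<integral>x. g x \<partial>M)" .
qed

lemma cutoff_bounded:
  fixes \<phi> :: "real \<Rightarrow> real"
  assumes "continuous_on {1..2} \<phi>" "\<forall>r\<ge>2. \<phi> r = 1" "\<forall>r\<in>{0..1}. \<phi> r = 0"
  obtains M where "\<And>r. r \<ge> 0 \<Longrightarrow> \<bar>\<phi> r\<bar> \<le> M"
proof -
  have "bounded (\<phi> ` {1..2})"
    by (rule compact_imp_bounded[OF compact_continuous_image[OF assms(1) compact_Icc]])
  then obtain M where M: "\<And>r. r \<in> {1..2} \<Longrightarrow> \<bar>\<phi> r\<bar> \<le> M"
    unfolding bounded_iff by fastforce
  show thesis
  proof (rule that[of "max M 1"])
    fix r :: real assume "r \<ge> 0"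
    then consider "r \<in> {0..1}" | "r \<ge> 2" | "r \<in> {1..2}" by fastforce
    then show "\<bar>\<phi> r\<bar> \<le> max M 1" using M assms(2,3) by cases fastforce+
  qed
qed

lemma square_inverse_power_le:
  assumes r: "r \<ge> (1::real)"
  shows "(1 / r^b)^2 \<le> 2^b * (1 + r^2) powr (- real b)"
proof -
  have pos: "1 + r^2 > 0" by (simp add: add_pos_nonneg)
  have "(1 + r^2)^b \<le> (2 * r^2)^b"
    using r by (intro power_mono) (auto simp: one_le_power)
  then have "1 / (r^2)^b \<le> 2^b / (1 + r^2)^b"
    using r pos by (simp add: divide_simps power_mult_distrib mult.commute)
  moreover have "(r^b)^2 = (r^2)^b" by (simp flip: power_mult add: mult.commute)
  ultimately show ?thesis
    by (simp add: powr_minus powr_realpow[OF pos] divide_inverse power_inverse)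
qed

lemma square_m2_le:
  assumes t: "t \<ge> 1" and b: "b \<ge> 1" and chiH_0: "\<forall>r\<in>{0..1}. chiH r = 0"
    and M: "\<And>r. r \<ge> 0 \<Longrightarrow> \<bar>chiH r\<bar> \<le> M"
  shows "(m2 chiH b l \<xi> t)^2
    \<le> (t^(b-1) * exp (-t/2))^2 * ((M * m2_bound_const b l)^2 * 2^b * (1 + norm \<xi>^2) powr (- real b))"
proof (cases "norm \<xi> \<ge> 1")
  case True
  let ?c = "t^(b-1) * exp (-t/2) * (M * m2_bound_const b l)"
  have "\<bar>m2 chiH b l \<xi> t\<bar> \<le> ?c * (1 / norm \<xi>^b)"
    using abs_m2_le[OF t b True M] by (simp add: mult_ac)
  then have "\<bar>m2 chiH b l \<xi> t\<bar>^2 \<le> (?c * (1 / norm \<xi>^b))^2"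
    by (rule power_mono) simp
  then have "(m2 chiH b l \<xi> t)^2 \<le> ?c^2 * (1 / norm \<xi>^b)^2"
    by (simp only: power2_abs power_mult_distrib)
  also have "\<dots> \<le> ?c^2 * (2^b * (1 + norm \<xi>^2) powr (- real b))"
    by (intro mult_left_mono square_inverse_power_le True) simp
  finally show ?thesis by (simp add: power_mult_distrib mult_ac)
next
  case False
  then show ?thesis using chiH_0 by (simp add: m2_def)
qed

lemma integrable_square_m2_and_sqrt_integral_le:
  fixes chiH :: "real \<Rightarrow> real" and b :: nat
  defines "g \<equiv> \<lambda>\<xi>::'a::euclidean_space. (1 + norm \<xi>^2) powr (- real b)"
  assumes b: "real b > DIM('a) / 2" and t: "t \<ge> 1" and cont: "continuous_on {0<..} chiH"
    and chiH_0: "\<forall>r\<in>{0..1}. chiH r = 0" and M: "\<And>r. r \<ge> 0 \<Longrightarrow> \<bar>chiH r\<bar> \<le> M"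
  shows "integrable lborel (\<lambda>\<xi>::'a. (m2 chiH b l \<xi> t)^2) \<and>
    sqrt (\<integral>\<xi>. (m2 chiH b l \<xi> t)^2 \<partial>(lborel::'a measure))
      \<le> \<bar>M\<bar> * m2_bound_const b l * sqrt (2^b * integral\<^sup>L lborel g) * t^(b-1) * exp (-t/2)"
proof -
  have "b \<ge> 1" using b by (cases b) auto
  have meas: "(\<lambda>\<xi>::'a. m2 chiH b l \<xi> t) \<in> borel_measurable lborel"
    using borel_measurable_m2[of t chiH] t cont chiH_0 by simp
  have int: "integrable lborel (\<lambda>\<xi>::'a. (M * m2_bound_const b l)^2 * 2^b * (1 + norm \<xi>^2) powr (- real b))"
    using b by (intro integrable_mult_right integrable_one_plus_norm_square_powr)
  have "integrable lborel (\<lambda>\<xi>::'a. (m2 chiH b l \<xi> t)^2) \<and>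
    sqrt (\<integral>\<xi>. (m2 chiH b l \<xi> t)^2 \<partial>(lborel::'a measure)) \<le> t^(b-1) * exp (-t/2) *
      sqrt (\<integral>\<xi>. (M * m2_bound_const b l)^2 * 2^b * (1 + norm \<xi>^2) powr (- real b) \<partial>(lborel::'a measure))"
    using integrable_square_and_sqrt_integral_le[OF meas int _ square_m2_le[OF t \<open>b \<ge> 1\<close> chiH_0 M]] t
    by simp
  moreover have "m2_bound_const b l > 0" by (simp add: m2_bound_const_def add_pos_nonneg)
  ultimately show ?thesis
    by (simp add: g_def real_sqrt_mult abs_mult mult_ac)
qed

theorem proposition2:
  fixes chiH :: "real \<Rightarrow> real" and b l :: nat
  assumes "real b > real CARD('n::finite) / 2"
    and "\<forall>k. (deriv ^^ k) chiH differentiable_on {0<..}"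
    and "\<forall>r\<ge>2. chiH r = 1"
    and "\<forall>r\<in>{0..1}. chiH r = 0"
  shows "\<exists>C>0. \<forall>t\<ge>1.
           integrable lborel (\<lambda>\<xi>::real^'n. (m2 chiH b l \<xi> t)^2) \<and>
           sqrt (integral\<^sup>L lborel (\<lambda>\<xi>::real^'n. (m2 chiH b l \<xi> t)^2)) \<le> C * t^(b-1) * exp (-t/2)"
proof -
  have cont: "continuous_on {0<..} chiH"
    using assms(2)[rule_format, of 0] by (simp add: differentiable_imp_continuous_on)
  then have "continuous_on {1..2} chiH" by (rule continuous_on_subset) auto
  then obtain M where M: "\<And>r. r \<ge> 0 \<Longrightarrow> \<bar>chiH r\<bar> \<le> M"
    using cutoff_bounded[OF _ assms(3,4)] by blast
  define K where "K = \<bar>M\<bar> * m2_bound_const b l *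
      sqrt (2^b * integral\<^sup>L lborel (\<lambda>\<xi>::real^'n. (1 + norm \<xi>^2) powr (- real b)))"
  have "max 1 K > 0" by simp
  moreover have "integrable lborel (\<lambda>\<xi>::real^'n. (m2 chiH b l \<xi> t)^2) \<and>
      sqrt (integral\<^sup>L lborel (\<lambda>\<xi>::real^'n. (m2 chiH b l \<xi> t)^2)) \<le> max 1 K * t^(b-1) * exp (-t/2)"
    if t: "t \<ge> 1" for t
  proof -
    have "K * t^(b-1) * exp (-t/2) \<le> max 1 K * t^(b-1) * exp (-t/2)"
      using t by (intro mult_right_mono) auto
    moreover have "integrable lborel (\<lambda>\<xi>::real^'n. (m2 chiH b l \<xi> t)^2) \<and>
        sqrt (integral\<^sup>L lborel (\<lambda>\<xi>::real^'n. (m2 chiH b l \<xi> t)^2)) \<le> K * t^(b-1) * exp (-t/2)"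
      using integrable_square_m2_and_sqrt_integral_le[where 'a="real^'n", of b t chiH M l] assms(1,4) cont M t
      unfolding K_def by simp
    ultimately show ?thesis by (blast intro: order_trans)
  qed
  ultimately show ?thesis by blast
qed

end
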